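(* Let $S\subset\mathbf R^4$ be an oriented immersed surface and let $\Gamma=(\Gamma_1,\Gamma_2):S\to \mathbf S^2\times\mathbf S^2$ be its Gauss map in sphere (Klein) coordinates. Then $S$ is congruent (i.e. mapped by a rigid motion of $\mathbf R^4$, a composition of a translation and an orthogonal linear map) to a Lagrangean surface of $(\mathbf R^4,\omega)$, $\omega=\mathrm dx\wedge \mathrm du+\mathrm dy\wedge\mathrm dv$, if and only if the image of $\Gamma_1$ or the image of $\Gamma_2$ is contained in a great circle of $\mathbf S^2$.
   Context: Coordinates on $\mathbf R^4$ are $(x,y,u,v)$ with standard orthonormal basis $e_1,e_2,e_3,e_4$. A Lagrangean surface of $(\mathbf R^4,\omega)$ is an immersed surface $L$ with $i^*\omega\equiv 0$, $i$ the immersion. For an oriented plane $P$ spanned by an oriented orthonormal pair $v_1=\sum c_ie_i$, $v_2=\sum d_ie_i$, its Plücker coordinates are $p_{ij}=c_id_j-c_jd_i$, so that $P=(p_{12},p_{13},p_{14},p_{34},p_{42},p_{23})\in\mathbf S^5\subset\mathbf R^6$ (note $p_{42}=-p_{24}$). Its Klein (sphere) coordinates are $a=(p_{12}+p_{34},\,p_{13}+p_{42},\,p_{14}+p_{23})$ and $b=(p_{12}-p_{34},\,p_{13}-p_{42},\,p_{14}-p_{23})$, both unit vectors in $\mathbf R^3$, giving $G_{2,4}\cong\mathbf S^2\times\mathbf S^2$. The Gauss map sends $p\in S$ to the oriented tangent plane $T_pS$ (translated to the origin); $\Gamma_1(p)=a(T_pS)$, $\Gamma_2(p)=b(T_pS)$.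 A great circle of $\mathbf S^2$ is its intersection with a plane through the origin. *)

theory Defs
  imports "HOL-Analysis.Analysis"
begin

text \<open>Coordinates on R^4: (x,y,u,v) = components 1,2,3,4.
  Surfaces are given by parametrisations (charts) f :: real^2 => real^4 on open sets.\<close>

definition e1 :: "real^2" where "e1 = axis 1 1"
definition e2 :: "real^2" where "e2 = axis 2 1"

definition immersion_on :: "(real^2) set \<Rightarrow> (real^2 \<Rightarrow> real^4) \<Rightarrow> bool" where
  "immersion_on U f \<longleftrightarrow>
     (\<forall>p\<in>U. f differentiable (at p) \<and> inj (frechet_derivative f (at p)))"

definition omega :: "real^4 \<Rightarrow> real^4 \<Rightarrow> real" where
  "omega a b = a$1 * b$3 - a$3 * b$1 + a$2 * b$4 - a$4 * b$2"

definition lagrangean_on :: "(real^2) set \<Rightarrow> (real^2 \<Rightarrow> real^4) \<Rightarrow> bool" where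
  "lagrangean_on U f \<longleftrightarrow>
     (\<forall>p\<in>U. \<forall>s t. omega (frechet_derivative f (at p) s) (frechet_derivative f (at p) t) = 0)"

definition gs1 :: "real^4 \<Rightarrow> real^4 \<Rightarrow> real^4" where
  "gs1 w1 w2 = (1 / norm w1) *\<^sub>R w1"
definition gs2 :: "real^4 \<Rightarrow> real^4 \<Rightarrow> real^4" where
  "gs2 w1 w2 = (let u = w2 - (w2 \<bullet> gs1 w1 w2) *\<^sub>R gs1 w1 w2 in (1 / norm u) *\<^sub>R u)"

definition pl :: "4 \<Rightarrow> 4 \<Rightarrow> real^4 \<Rightarrow> real^4 \<Rightarrow> real" where
  "pl i j c d = c$i * d$j - c$j * d$i"

definition klein_a :: "real^4 \<Rightarrow> real^4 \<Rightarrow> real^3" where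
  "klein_a c d = vector [pl 1 2 c d + pl 3 4 c d, pl 1 3 c d + pl 4 2 c d, pl 1 4 c d + pl 2 3 c d]"
definition klein_b :: "real^4 \<Rightarrow> real^4 \<Rightarrow> real^3" where
  "klein_b c d = vector [pl 1 2 c d - pl 3 4 c d, pl 1 3 c d - pl 4 2 c d, pl 1 4 c d - pl 2 3 c d]"

text \<open>Gauss map in sphere coordinates: tangent plane oriented by (Df e1, Df e2).\<close>
definition Gamma1 :: "(real^2 \<Rightarrow> real^4) \<Rightarrow> real^2 \<Rightarrow> real^3" where
  "Gamma1 f p = (let w1 = frechet_derivative f (at p) e1; w2 = frechet_derivative f (at p) e2
                 in klein_a (gs1 w1 w2) (gs2 w1 w2))"
definition Gamma2 :: "(real^2 \<Rightarrow> real^4) \<Rightarrow> real^2 \<Rightarrow> real^3" where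
  "Gamma2 f p = (let w1 = frechet_derivative f (at p) e1; w2 = frechet_derivative f (at p) e2
                 in klein_b (gs1 w1 w2) (gs2 w1 w2))"

definition great_circle :: "real^3 \<Rightarrow> (real^3) set" where
  "great_circle n = {z. norm z = 1 \<and> n \<bullet> z = 0}"

end

theory Submission
  imports Defs
begin

text \<open>Write \<open>\<omega>(x, y) = x \<bullet> J y\<close>. For an orthogonal \<open>Q\<close> the pulled back form is \<open>x \<bullet> M y\<close>
  with \<open>M = Q\<^sup>T J Q\<close> antisymmetric and \<open>M\<^sup>2 = -1\<close>; such an \<open>M\<close> is either self-dual or
  anti-self-dual, i.e. \<open>\<omega>(Q x, Q y) = \<alpha> \<bullet> a(x \<and> y)\<close> or \<open>\<beta> \<bullet> b(x \<and> y)\<close> with \<open>\<alpha>, \<beta> \<noteq> 0\<close>.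
  Conversely, for every \<open>n \<noteq> 0\<close> left multiplication by a suitable pure quaternion (composed with
  a reflection to swap the roles of \<open>a\<close> and \<open>b\<close>) is an orthogonal map pulling \<open>\<omega>\<close> back to a
  multiple of \<open>n \<bullet> b\<close>. Since Gram--Schmidt only rescales the Klein coordinates of \<open>(Df e\<^sub>1, Df e\<^sub>2)\<close>
  by a positive factor, and a 2-form vanishes on a plane iff it vanishes on one basis of it, \<open>Q \<circ> f\<close>
  is Lagrangean iff \<open>\<Gamma>\<^sub>1\<close> (resp. \<open>\<Gamma>\<^sub>2\<close>) lies on the great circle orthogonal to \<open>\<alpha>\<close> (resp. \<open>\<beta>\<close>).\<close>

text \<open>The hypotheses say that the antisymmetric matrix with upper entries \<open>m\<^sub>i\<^sub>j\<close> squares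
  to \<open>-1\<close>. Every product \<open>a\<^sub>i b\<^sub>j\<close> is a combination of them and hence vanishes, while
  \<open>a = b = 0\<close> would force the first row to be zero.\<close>
lemma self_dual_or_anti_self_dual_coeffs:
  fixes m12 m13 m14 m23 m24 m34 :: real
  assumes d1: "m12*m12 + m13*m13 + m14*m14 = 1"
    and "m12*m12 + m23*m23 + m24*m24 = 1"
    and "m13*m13 + m23*m23 + m34*m34 = 1"
    and "m14*m14 + m24*m24 + m34*m34 = 1"
    and "m13*m23 + m14*m24 = 0"
    and "m12*m23 - m14*m34 = 0"
    and "m12*m24 + m13*m34 = 0"
    and "m12*m13 + m24*m34 = 0"
    and "m12*m14 - m23*m34 = 0"
    and "m13*m14 + m23*m24 = 0"
  defines "a \<equiv> (vector [m12 + m34, m13 - m24, m14 + m23] :: real^3)"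
    and "b \<equiv> (vector [m12 - m34, m13 + m24, m14 - m23] :: real^3)"
  shows "(a = 0 \<or> b = 0) \<and> \<not> (a = 0 \<and> b = 0)"
proof -
  have products: "(m12+m34) * (m12-m34) = 0" "(m12+m34) * (m13+m24) = 0" "(m12+m34) * (m14-m23) = 0"
    "(m13-m24) * (m12-m34) = 0" "(m13-m24) * (m13+m24) = 0" "(m13-m24) * (m14-m23) = 0"
    "(m14+m23) * (m12-m34) = 0" "(m14+m23) * (m13+m24) = 0" "(m14+m23) * (m14-m23) = 0"
    using assms by (simp_all add: algebra_simps; linarith)+
  have "a = 0 \<or> b = 0"
    using products unfolding a_def b_def by (auto simp: vec_eq_iff forall_3)
  moreover have "\<not> (a = 0 \<and> b = 0)"
  proof
    assume "a = 0 \<and> b = 0"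
    then have "m12 = 0" "m13 = 0" "m14 = 0"
      unfolding a_def b_def by (simp_all add: vec_eq_iff forall_3)
    with d1 show False by simp
  qed
  ultimately show ?thesis ..
qed

definition omega_matrix :: "real^4^4" where
  "omega_matrix = (\<chi> i j. if (i = 1 \<and> j = 3) \<or> (i = 2 \<and> j = 4) then 1
                         else if (i = 3 \<and> j = 1) \<or> (i = 4 \<and> j = 2) then -1 else 0)"

lemma omega_eq_inner_omega_matrix: "omega x y = x \<bullet> (omega_matrix *v y)"
  by (simp add: omega_def inner_vec_def matrix_vector_mult_def sum_4 omega_matrix_def algebra_simps)

lemma omega_matrix_squared: "omega_matrix ** omega_matrix = - mat 1"
  by (simp add: vec_eq_iff forall_4 matrix_matrix_mult_def sum_4 mat_def omega_matrix_def)

lemma transpose_omega_matrix: "transpose omega_matrix = - omega_matrix"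
  by (simp add: vec_eq_iff forall_4 transpose_def omega_matrix_def)

lemma inner_matrix_vector_mult_left: "(A *v x) \<bullet> (z :: real^'n) = x \<bullet> (transpose A *v z)"
  by (metis dot_lmul_matrix inner_commute transpose_matrix_vector)

lemma matrix_mul_uminus_left: "(- A) ** B = - (A ** (B :: real^'n^'n))"
  by (simp add: matrix_matrix_mult_def vec_eq_iff sum_negf)

lemma matrix_mul_uminus_right: "A ** (- B) = - (A ** (B :: real^'n^'n))"
  by (simp add: matrix_matrix_mult_def vec_eq_iff sum_negf)

lemma omega_orthogonal_pullback:
  fixes Q :: "real^4 \<Rightarrow> real^4"
  assumes "orthogonal_transformation Q"
  defines "M \<equiv> transpose (matrix Q) ** omega_matrix ** matrix Q"
  shows "omega (Q x) (Q y) = x \<bullet> (M *v y)"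
    and "M ** M = - mat 1"
    and "transpose M = - M"
proof -
  let ?A = "matrix Q"
  have "linear Q" and orth: "orthogonal_matrix ?A"
    using assms(1) orthogonal_transformation_matrix by blast+
  then have Q: "Q z = ?A *v z" for z
    by (simp add: matrix_works)
  show "omega (Q x) (Q y) = x \<bullet> (M *v y)"
    by (simp add: omega_eq_inner_omega_matrix Q inner_matrix_vector_mult_left M_def
        matrix_vector_mul_assoc matrix_mul_assoc)
  have inv: "?A ** transpose ?A = mat 1"
    using orth by (simp add: orthogonal_matrix_def)
  have "M ** M = transpose ?A ** omega_matrix ** (?A ** transpose ?A) ** omega_matrix ** ?A"
    by (simp add: M_def matrix_mul_assoc)
  also have "\<dots> = transpose ?A ** (omega_matrix ** omega_matrix) ** ?A"
    by (simp add: inv matrix_mul_assoc)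
  also have "\<dots> = - mat 1"
    using orth by (simp add: omega_matrix_squared matrix_mul_uminus_left matrix_mul_uminus_right
        orthogonal_matrix_def)
  finally show "M ** M = - mat 1" .
  show "transpose M = - M"
    by (simp add: M_def matrix_transpose_mul transpose_omega_matrix matrix_mul_uminus_left
        matrix_mul_uminus_right matrix_mul_assoc)
qed

lemma antisymmetric_complex_structure_klein:
  fixes M :: "real^4^4"
  assumes antisym: "transpose M = - M" and square: "M ** M = - mat 1"
  obtains \<alpha> \<beta> where "\<alpha> = 0 \<or> \<beta> = 0" "\<not> (\<alpha> = 0 \<and> \<beta> = 0)"
    "\<And>x y. x \<bullet> (M *v y) = \<alpha> \<bullet> klein_a x y + \<beta> \<bullet> klein_b x y"
proof -
  have skew: "M$j$i = - M$i$j" for i j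
    using arg_cong[OF antisym, of "\<lambda>X. X$i$j"] by (simp add: transpose_def)
  have diag: "M$i$i = 0" for i
    using skew[of i i] by simp
  have sq: "(\<Sum>k\<in>UNIV. M$i$k * M$k$j) = (if i = j then -1 else 0)" for i j
    using arg_cong[OF square, of "\<lambda>X. X$i$j"] by (simp add: matrix_matrix_mult_def mat_def)
  define m12 where "m12 = M$1$2"
  define m13 where "m13 = M$1$3"
  define m14 where "m14 = M$1$4"
  define m23 where "m23 = M$2$3"
  define m24 where "m24 = M$2$4"
  define m34 where "m34 = M$3$4"
  note m_defs = m12_def[symmetric] m13_def[symmetric] m14_def[symmetric]
    m23_def[symmetric] m24_def[symmetric] m34_def[symmetric]
  have lower: "M$2$1 = -m12" "M$3$1 = -m13" "M$4$1 = -m14" "M$3$2 = -m23" "M$4$2 = -m24" "M$4$3 = -m34"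
    unfolding m12_def m13_def m14_def m23_def m24_def m34_def
    using skew[of 1 2] skew[of 1 3] skew[of 1 4] skew[of 2 3] skew[of 2 4] skew[of 3 4] by simp_all
  have eqs: "m12*m12 + m13*m13 + m14*m14 = 1" "m12*m12 + m23*m23 + m24*m24 = 1"
    "m13*m13 + m23*m23 + m34*m34 = 1" "m14*m14 + m24*m24 + m34*m34 = 1"
    "m13*m23 + m14*m24 = 0" "m12*m23 - m14*m34 = 0" "m12*m24 + m13*m34 = 0"
    "m12*m13 + m24*m34 = 0" "m12*m14 - m23*m34 = 0" "m13*m14 + m23*m24 = 0"
    using sq[of 1 1] sq[of 2 2] sq[of 3 3] sq[of 4 4] sq[of 1 2]
      sq[of 1 3] sq[of 1 4] sq[of 2 3] sq[of 2 4] sq[of 3 4]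
    by (simp_all add: sum_4 diag lower m_defs; linarith)+
  define a where "a = (vector [m12 + m34, m13 - m24, m14 + m23] :: real^3)"
  define b where "b = (vector [m12 - m34, m13 + m24, m14 - m23] :: real^3)"
  have "(a = 0 \<or> b = 0) \<and> \<not> (a = 0 \<and> b = 0)"
    unfolding a_def b_def by (rule self_dual_or_anti_self_dual_coeffs[OF eqs])
  moreover have "x \<bullet> (M *v y) = (a /\<^sub>R 2) \<bullet> klein_a x y + (b /\<^sub>R 2) \<bullet> klein_b x y" for x y
    by (simp add: inner_vec_def matrix_vector_mult_def sum_4 sum_3 diag lower a_def b_def
        klein_a_def klein_b_def pl_def m_defs field_simps)
  ultimately show ?thesis
    using that[of "a /\<^sub>R 2" "b /\<^sub>R 2"] by auto
qed

lemma vector_4 [simp]: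
  "(vector [x, y, z, w] :: 'a::zero^4)$1 = x"
  "(vector [x, y, z, w] :: 'a::zero^4)$2 = y"
  "(vector [x, y, z, w] :: 'a::zero^4)$3 = z"
  "(vector [x, y, z, w] :: 'a::zero^4)$4 = w"
  unfolding vector_def by simp_all

text \<open>Left multiplication by the pure quaternion \<open>b i + c j + d k\<close>, identifying \<open>x\<close> with
  \<open>x\<^sub>1 + x\<^sub>2 i + x\<^sub>3 j + x\<^sub>4 k\<close>.\<close>
definition pure_quaternion_mult :: "real \<Rightarrow> real \<Rightarrow> real \<Rightarrow> real^4 \<Rightarrow> real^4" where
  "pure_quaternion_mult b c d x = vector [- b*x$2 - c*x$3 - d*x$4, b*x$1 + d*x$3 - c*x$4,
                                          c*x$1 - d*x$2 + b*x$4, d*x$1 + c*x$2 - b*x$3]"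

lemma linear_pure_quaternion_mult: "linear (pure_quaternion_mult b c d)"
  by (rule linearI) (simp_all add: pure_quaternion_mult_def vec_eq_iff forall_4 algebra_simps)

lemma inner_pure_quaternion_mult:
  "pure_quaternion_mult b c d x \<bullet> pure_quaternion_mult b c d y = (b*b + c*c + d*d) * (x \<bullet> y)"
  by (simp add: pure_quaternion_mult_def inner_vec_def sum_4 algebra_simps)

lemma omega_pure_quaternion_mult:
  "omega (pure_quaternion_mult b c d x) (pure_quaternion_mult b c d y) =
     vector [2*c*b, 2*c*c - (b*b + c*c + d*d), 2*c*d] \<bullet> klein_b x y"
  by (simp add: pure_quaternion_mult_def omega_def klein_b_def pl_def inner_vec_def sum_3 algebra_simps)

lemma omega_scaleR: "omega (r *\<^sub>R x) (r *\<^sub>R y) = (r * r) * omega x y"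
  by (simp add: omega_def algebra_simps)

lemma omega_eq_klein_b_2: "omega x y = klein_b x y $ 2"
  by (simp add: omega_def klein_b_def pl_def algebra_simps)

text \<open>With \<open>c = n\<^sub>2 + |n|\<close>, the quaternion \<open>n\<^sub>1 i + c j + n\<^sub>3 k\<close> makes the coefficient vector
  of the pulled back form equal to \<open>2c n\<close>. If \<open>c = 0\<close>, then \<open>n\<close> is a negative multiple of the
  second basis vector and the identity already works.\<close>
lemma orthogonal_omega_pullback_klein_b:
  fixes n :: "real^3"
  assumes "n \<noteq> 0"
  obtains Q l where "orthogonal_transformation Q" "l \<noteq> 0"
    "\<And>x y. omega (Q x) (Q y) = l * (n \<bullet> klein_b x y)"
proof -
  define r where "r = norm n"
  have r2: "r*r = n$1*n$1 + n$2*n$2 + n$3*n$3"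
    using power2_norm_eq_inner[of n] by (simp add: r_def inner_vec_def sum_3 power2_eq_square)
  show ?thesis
  proof (cases "n$2 + r = 0")
    case True
    then have "n$1*n$1 + n$3*n$3 = 0"
      using r2 by (simp add: add_eq_0_iff)
    then have "n$1 = 0" "n$3 = 0"
      by (simp_all add: sum_squares_eq_zero_iff)
    moreover from this have "n$2 \<noteq> 0"
      using assms by (metis exhaust_3 vec_eq_iff zero_index)
    ultimately show ?thesis
      by (intro that[of "\<lambda>x. x" "1 / n$2"] orthogonal_transformation_id)
        (simp_all add: omega_eq_klein_b_2 inner_vec_def sum_3)
  next
    case False
    define c where "c = n$2 + r"
    define N where "N = n$1*n$1 + c*c + n$3*n$3"
    have "c \<noteq> 0"
      using False c_def by simp
    then have "c * c > 0"
      by (auto simp: zero_less_mult_iff linorder_neq_iff)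
    then have "N > 0"
      using zero_le_square[of "n$1"] zero_le_square[of "n$3"] unfolding N_def by linarith
    define Q where "Q x = (1 / sqrt N) *\<^sub>R pure_quaternion_mult (n$1) c (n$3) x" for x
    have scale: "(1 / sqrt N) * (1 / sqrt N) = 1 / N"
      using \<open>N > 0\<close> by (simp add: real_sqrt_mult[symmetric])
    have "orthogonal_transformation Q"
      unfolding orthogonal_transformation_def Q_def
      using \<open>N > 0\<close> scale linear_compose_scale_right[OF linear_pure_quaternion_mult]
      by (simp add: inner_pure_quaternion_mult N_def[symmetric] mult.assoc[symmetric])
    moreover have "vector [2*c*n$1, 2*c*c - N, 2*c*n$3] = (2*c) *\<^sub>R n"
      using r2 unfolding N_def c_def by (simp add: vec_eq_iff forall_3 algebra_simps)
    then have "omega (Q x) (Q y) = (2*c/N) * (n \<bullet> klein_b x y)" for x y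
      unfolding Q_def omega_scaleR omega_pure_quaternion_mult scale N_def[symmetric] by simp
    ultimately show ?thesis
      using that[of Q "2*c/N"] \<open>c \<noteq> 0\<close> \<open>N > 0\<close> by simp
  qed
qed

definition reflect_4 :: "real^4 \<Rightarrow> real^4" where
  "reflect_4 x = vector [x$1, x$2, x$3, - x$4]"

lemma orthogonal_transformation_reflect_4: "orthogonal_transformation reflect_4"
  unfolding orthogonal_transformation_def
  by (auto intro!: linearI simp: reflect_4_def vec_eq_iff forall_4 inner_vec_def sum_4)

lemma klein_b_reflect_4:
  "klein_b (reflect_4 x) (reflect_4 y) = vector [klein_a x y $ 1, klein_a x y $ 2, - klein_a x y $ 3]"
  by (simp add: reflect_4_def klein_a_def klein_b_def pl_def vec_eq_iff forall_3 algebra_simps)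

lemma orthogonal_omega_pullback_klein_a:
  fixes n :: "real^3"
  assumes "n \<noteq> 0"
  obtains Q l where "orthogonal_transformation Q" "l \<noteq> 0"
    "\<And>x y. omega (Q x) (Q y) = l * (n \<bullet> klein_a x y)"
proof -
  define n' where "n' = (vector [n$1, n$2, - n$3] :: real^3)"
  have "n' \<noteq> 0"
    using assms unfolding n'_def by (simp add: vec_eq_iff forall_3)
  then obtain Q l where Q: "orthogonal_transformation Q" "l \<noteq> 0"
    and omega_Q: "\<And>x y. omega (Q x) (Q y) = l * (n' \<bullet> klein_b x y)"
    by (rule orthogonal_omega_pullback_klein_b) blast
  have "omega ((Q \<circ> reflect_4) x) ((Q \<circ> reflect_4) y) = l * (n \<bullet> klein_a x y)" for x y
    by (simp add: omega_Q klein_b_reflect_4 n'_def inner_vec_def sum_3)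
  then show ?thesis
    using that Q orthogonal_transformation_compose[OF Q(1) orthogonal_transformation_reflect_4] by blast
qed

lemma orthogonal_isotropic_iff_klein_annihilated:
  fixes T :: "((real^4) \<times> (real^4)) set"
  shows "(\<exists>Q. orthogonal_transformation Q \<and> (\<forall>(x, y)\<in>T. omega (Q x) (Q y) = 0)) \<longleftrightarrow>
         (\<exists>n. n \<noteq> 0 \<and> (\<forall>(x, y)\<in>T. n \<bullet> klein_a x y = 0)) \<or>
         (\<exists>n. n \<noteq> 0 \<and> (\<forall>(x, y)\<in>T. n \<bullet> klein_b x y = 0))"
proof
  assume "\<exists>Q. orthogonal_transformation Q \<and> (\<forall>(x, y)\<in>T. omega (Q x) (Q y) = 0)"
  then obtain Q where Q: "orthogonal_transformation Q"
    and isotropic: "\<forall>(x, y)\<in>T. omega (Q x) (Q y) = 0" by blast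
  define M where "M = transpose (matrix Q) ** omega_matrix ** matrix Q"
  obtain \<alpha> \<beta> where exactly_one: "\<alpha> = 0 \<or> \<beta> = 0" "\<not> (\<alpha> = 0 \<and> \<beta> = 0)"
    and M: "\<And>x y. x \<bullet> (M *v y) = \<alpha> \<bullet> klein_a x y + \<beta> \<bullet> klein_b x y"
    using antisymmetric_complex_structure_klein[OF omega_orthogonal_pullback(3,2)[OF Q]]
    unfolding M_def by blast
  have vanishing: "\<alpha> \<bullet> klein_a x y + \<beta> \<bullet> klein_b x y = 0" if "(x, y) \<in> T" for x y
    using bspec[OF isotropic that]
    by (simp only: omega_orthogonal_pullback(1)[OF Q] M_def[symmetric] M prod.case)
  show "(\<exists>n. n \<noteq> 0 \<and> (\<forall>(x, y)\<in>T. n \<bullet> klein_a x y = 0)) \<or>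
        (\<exists>n. n \<noteq> 0 \<and> (\<forall>(x, y)\<in>T. n \<bullet> klein_b x y = 0))"
  proof (cases "\<beta> = 0")
    case True
    then have "\<alpha> \<noteq> 0" "\<forall>(x, y)\<in>T. \<alpha> \<bullet> klein_a x y = 0"
      using exactly_one(2) vanishing by auto
    then show ?thesis by blast
  next
    case False
    then have "\<forall>(x, y)\<in>T. \<beta> \<bullet> klein_b x y = 0"
      using exactly_one(1) vanishing by auto
    with False show ?thesis by blast
  qed
next
  assume "(\<exists>n. n \<noteq> 0 \<and> (\<forall>(x, y)\<in>T. n \<bullet> klein_a x y = 0)) \<or>
          (\<exists>n. n \<noteq> 0 \<and> (\<forall>(x, y)\<in>T. n \<bullet> klein_b x y = 0))"
  then show "\<exists>Q. orthogonal_transformation Q \<and> (\<forall>(x, y)\<in>T. omega (Q x) (Q y) = 0)"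
  proof (elim disjE exE conjE)
    fix n :: "real^3"
    assume "n \<noteq> 0" and annihilated: "\<forall>(x, y)\<in>T. n \<bullet> klein_a x y = 0"
    obtain Q l where "orthogonal_transformation Q"
      and "\<And>x y. omega (Q x) (Q y) = l * (n \<bullet> klein_a x y)"
      using orthogonal_omega_pullback_klein_a[OF \<open>n \<noteq> 0\<close>] by metis
    with annihilated show ?thesis
      by (intro exI[of _ Q]) auto
  next
    fix n :: "real^3"
    assume "n \<noteq> 0" and annihilated: "\<forall>(x, y)\<in>T. n \<bullet> klein_b x y = 0"
    obtain Q l where "orthogonal_transformation Q"
      and "\<And>x y. omega (Q x) (Q y) = l * (n \<bullet> klein_b x y)"
      using orthogonal_omega_pullback_klein_b[OF \<open>n \<noteq> 0\<close>] by metis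
    with annihilated show ?thesis
      by (intro exI[of _ Q]) auto
  qed
qed

lemma norm_klein_a_squared: "(norm (klein_a c d))\<^sup>2 = (c \<bullet> c) * (d \<bullet> d) - (c \<bullet> d)\<^sup>2"
  unfolding power2_norm_eq_inner
  by (simp add: inner_vec_def sum_3 sum_4 klein_a_def pl_def power2_eq_square algebra_simps)

lemma norm_klein_b_squared: "(norm (klein_b c d))\<^sup>2 = (c \<bullet> c) * (d \<bullet> d) - (c \<bullet> d)\<^sup>2"
  unfolding power2_norm_eq_inner
  by (simp add: inner_vec_def sum_3 sum_4 klein_b_def pl_def power2_eq_square algebra_simps)

lemma norm_klein_orthonormal:
  assumes "norm c = 1" "norm d = 1" "c \<bullet> d = 0"
  shows "norm (klein_a c d) = 1" "norm (klein_b c d) = 1"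
proof -
  have "c \<bullet> c = 1" "d \<bullet> d = 1"
    using assms by (simp_all add: power2_norm_eq_inner[symmetric])
  then have "(norm (klein_a c d))\<^sup>2 = 1\<^sup>2" "(norm (klein_b c d))\<^sup>2 = 1\<^sup>2"
    using assms(3) by (simp_all add: norm_klein_a_squared norm_klein_b_squared)
  then show "norm (klein_a c d) = 1" "norm (klein_b c d) = 1"
    by (simp_all only: power2_eq_iff_nonneg norm_ge_zero zero_le_one)
qed

lemma klein_bilinear:
  "klein_a (r *\<^sub>R x) y = r *\<^sub>R klein_a x y" "klein_a x (r *\<^sub>R y) = r *\<^sub>R klein_a x y"
  "klein_a x (y - z) = klein_a x y - klein_a x z" "klein_a x x = 0"
  "klein_b (r *\<^sub>R x) y = r *\<^sub>R klein_b x y" "klein_b x (r *\<^sub>R y) = r *\<^sub>R klein_b x y"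
  "klein_b x (y - z) = klein_b x y - klein_b x z" "klein_b x x = 0"
  by (simp_all add: klein_a_def klein_b_def pl_def vec_eq_iff forall_3 algebra_simps)

lemma klein_gram_schmidt:
  fixes w1 w2 :: "real^4"
  assumes "w1 \<noteq> 0" and "w2 - (w2 \<bullet> gs1 w1 w2) *\<^sub>R gs1 w1 w2 \<noteq> 0"
  obtains k where "k > 0"
    "klein_a (gs1 w1 w2) (gs2 w1 w2) = k *\<^sub>R klein_a w1 w2"
    "klein_b (gs1 w1 w2) (gs2 w1 w2) = k *\<^sub>R klein_b w1 w2"
    "norm (klein_a (gs1 w1 w2) (gs2 w1 w2)) = 1"
    "norm (klein_b (gs1 w1 w2) (gs2 w1 w2)) = 1"
proof -
  define g where "g = gs1 w1 w2"
  define u where "u = w2 - (w2 \<bullet> g) *\<^sub>R g"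
  have g: "g = (1 / norm w1) *\<^sub>R w1"
    unfolding g_def gs1_def ..
  have gs2: "gs2 w1 w2 = (1 / norm u) *\<^sub>R u"
    unfolding gs2_def u_def g_def Let_def ..
  have "u \<noteq> 0"
    using assms(2) unfolding u_def g_def .
  have "norm g = 1"
    using assms(1) by (simp add: g)
  then have "g \<bullet> u = 0"
    unfolding u_def by (simp add: inner_diff_right inner_commute power2_norm_eq_inner[symmetric])
  then have "norm (klein_a g (gs2 w1 w2)) = 1 \<and> norm (klein_b g (gs2 w1 w2)) = 1"
    using norm_klein_orthonormal \<open>norm g = 1\<close> \<open>u \<noteq> 0\<close> by (simp add: gs2)
  moreover have "klein_a w1 u = klein_a w1 w2" "klein_b w1 u = klein_b w1 w2"
    unfolding u_def g by (simp_all add: klein_bilinear)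
  then have "klein_a g (gs2 w1 w2) = (1 / norm w1 * (1 / norm u)) *\<^sub>R klein_a w1 w2"
    "klein_b g (gs2 w1 w2) = (1 / norm w1 * (1 / norm u)) *\<^sub>R klein_b w1 w2"
    unfolding gs2 by (simp_all add: g klein_bilinear)
  moreover have "1 / norm w1 * (1 / norm u) > 0"
    using assms(1) \<open>u \<noteq> 0\<close> by simp
  ultimately show ?thesis
    using that unfolding g_def by blast
qed

lemma e2_not_multiple_e1: "e2 - s *\<^sub>R e1 \<noteq> 0"
  by (simp add: vec_eq_iff forall_2 e1_def e2_def axis_def)

lemma immersion_onD:
  assumes "immersion_on U f" "p \<in> U"
  defines "D \<equiv> frechet_derivative f (at p)"
  shows "(f has_derivative D) (at p)" "linear D" "D e1 \<noteq> 0"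
    "D e2 - (D e2 \<bullet> gs1 (D e1) (D e2)) *\<^sub>R gs1 (D e1) (D e2) \<noteq> 0"
proof -
  have "f differentiable (at p)" and inj: "inj D"
    using assms unfolding immersion_on_def by auto
  then show "(f has_derivative D) (at p)"
    unfolding D_def by (simp add: frechet_derivative_works)
  then show lin: "linear D"
    using has_derivative_linear by blast
  have "e1 \<noteq> 0"
    using e2_not_multiple_e1[of 0] by (auto simp: e1_def e2_def vec_eq_iff forall_2 axis_def)
  then show "D e1 \<noteq> 0"
    using inj lin by (metis injD linear_0)
  define s where "s = (D e2 \<bullet> gs1 (D e1) (D e2)) / norm (D e1)"
  have "D e2 - (D e2 \<bullet> gs1 (D e1) (D e2)) *\<^sub>R gs1 (D e1) (D e2) = D (e2 - s *\<^sub>R e1)"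
    using lin by (simp add: gs1_def s_def linear_diff linear_cmul)
  then show "D e2 - (D e2 \<bullet> gs1 (D e1) (D e2)) *\<^sub>R gs1 (D e1) (D e2) \<noteq> 0"
    using inj lin e2_not_multiple_e1 by (metis injD linear_0)
qed

lemma Gamma_great_circle_iff:
  assumes "immersion_on U f" "p \<in> U"
  defines "D \<equiv> frechet_derivative f (at p)"
  shows "Gamma1 f p \<in> great_circle n \<longleftrightarrow> n \<bullet> klein_a (D e1) (D e2) = 0"
    and "Gamma2 f p \<in> great_circle n \<longleftrightarrow> n \<bullet> klein_b (D e1) (D e2) = 0"
proof -
  note D = immersion_onD[OF assms(1,2), folded D_def]
  obtain k where "k > 0"
    "klein_a (gs1 (D e1) (D e2)) (gs2 (D e1) (D e2)) = k *\<^sub>R klein_a (D e1) (D e2)"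
    "klein_b (gs1 (D e1) (D e2)) (gs2 (D e1) (D e2)) = k *\<^sub>R klein_b (D e1) (D e2)"
    "norm (klein_a (gs1 (D e1) (D e2)) (gs2 (D e1) (D e2))) = 1"
    "norm (klein_b (gs1 (D e1) (D e2)) (gs2 (D e1) (D e2))) = 1"
    using klein_gram_schmidt[OF D(3,4)] by metis
  then show "Gamma1 f p \<in> great_circle n \<longleftrightarrow> n \<bullet> klein_a (D e1) (D e2) = 0"
    and "Gamma2 f p \<in> great_circle n \<longleftrightarrow> n \<bullet> klein_b (D e1) (D e2) = 0"
    unfolding Gamma1_def Gamma2_def great_circle_def Let_def D_def[symmetric] by auto
qed

lemma omega_linear_combination:
  "omega (a *\<^sub>R u + b *\<^sub>R v) (c *\<^sub>R u + d *\<^sub>R v) = (a*d - b*c) * omega u v"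
  by (simp add: omega_def algebra_simps)

lemma vec2_eq_combination_e1_e2: "(s :: real^2) = s$1 *\<^sub>R e1 + s$2 *\<^sub>R e2"
  by (simp add: vec_eq_iff forall_2 e1_def e2_def axis_def)

text \<open>Both sides of the rigid motion have derivative \<open>Q \<circ> Df\<close>, and \<open>\<omega>\<close> restricted to its
  image is a multiple of the determinant, so it suffices to test the basis \<open>e\<^sub>1, e\<^sub>2\<close>.\<close>
lemma lagrangean_on_rigid_motion_iff:
  assumes "linear Q" "immersion_on U f"
  shows "lagrangean_on U (\<lambda>x. Q (f x) + c) \<longleftrightarrow>
    (\<forall>p\<in>U. omega (Q (frechet_derivative f (at p) e1)) (Q (frechet_derivative f (at p) e2)) = 0)"
proof -
  have derivative: "frechet_derivative (\<lambda>x. Q (f x) + c) (at p) = Q \<circ> frechet_derivative f (at p)"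
    if "p \<in> U" for p
  proof -
    have "((\<lambda>x. Q (f x)) has_derivative Q \<circ> frechet_derivative f (at p)) (at p)"
      using bounded_linear.has_derivative[OF linear_conv_bounded_linear[THEN iffD1, OF assms(1)]
          immersion_onD(1)[OF assms(2) that]]
      by (simp add: o_def)
    then show ?thesis
      by (metis frechet_derivative_at has_derivative_add_const)
  qed
  have determinant: "omega ((Q \<circ> D) s) ((Q \<circ> D) t) = (s$1 * t$2 - s$2 * t$1) * omega (Q (D e1)) (Q (D e2))"
    if "linear D" for D :: "real^2 \<Rightarrow> real^4" and s t
  proof -
    have "(Q \<circ> D) z = z$1 *\<^sub>R Q (D e1) + z$2 *\<^sub>R Q (D e2)" for z
      by (subst vec2_eq_combination_e1_e2)
        (simp add: linear_add[OF that] linear_cmul[OF that] linear_add[OF assms(1)] linear_cmul[OF assms(1)])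
    then show ?thesis
      by (simp only: omega_linear_combination)
  qed
  have "omega (frechet_derivative (\<lambda>x. Q (f x) + c) (at p) s) (frechet_derivative (\<lambda>x. Q (f x) + c) (at p) t)
      = (s$1 * t$2 - s$2 * t$1) * omega (Q (frechet_derivative f (at p) e1)) (Q (frechet_derivative f (at p) e2))"
    if "p \<in> U" for p s t
    unfolding derivative[OF that] by (rule determinant[OF immersion_onD(2)[OF assms(2) that]])
  moreover have "e1$1 * e2$2 - e1$2 * e2$1 = 1"
    by (simp add: e1_def e2_def axis_def)
  ultimately show ?thesis
    unfolding lagrangean_on_def by (metis mult_1 mult_zero_right)
qed

theorem mainTheorem1:
  fixes f :: "'i \<Rightarrow> real^2 \<Rightarrow> real^4" and U :: "'i \<Rightarrow> (real^2) set"
  assumes "\<forall>i. open (U i)"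
    and "\<forall>i. immersion_on (U i) (f i)"
  shows "(\<exists>Q c. orthogonal_transformation Q \<and>
            (\<forall>i. lagrangean_on (U i) (\<lambda>x. Q (f i x) + c)))
         \<longleftrightarrow>
         ((\<exists>n. n \<noteq> 0 \<and> (\<forall>i. \<forall>p\<in>U i. Gamma1 (f i) p \<in> great_circle n)) \<or>
          (\<exists>n. n \<noteq> 0 \<and> (\<forall>i. \<forall>p\<in>U i. Gamma2 (f i) p \<in> great_circle n)))"
proof -
  define T where "T = {(frechet_derivative (f i) (at p) e1, frechet_derivative (f i) (at p) e2) | i p. p \<in> U i}"
  have ball_T: "(\<forall>(x, y)\<in>T. P x y) \<longleftrightarrow>
      (\<forall>i. \<forall>p\<in>U i. P (frechet_derivative (f i) (at p) e1) (frechet_derivative (f i) (at p) e2))" for P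
    unfolding T_def by auto
  have lagrangean: "(\<forall>i. lagrangean_on (U i) (\<lambda>x. Q (f i x) + c)) \<longleftrightarrow>
      (\<forall>(x, y)\<in>T. omega (Q x) (Q y) = 0)" if "orthogonal_transformation Q" for Q and c :: "real^4"
    using that unfolding ball_T orthogonal_transformation_def
    by (simp add: lagrangean_on_rigid_motion_iff assms(2))
  have "(\<exists>Q c. orthogonal_transformation Q \<and> (\<forall>i. lagrangean_on (U i) (\<lambda>x. Q (f i x) + c))) \<longleftrightarrow>
      (\<exists>Q. orthogonal_transformation Q \<and> (\<forall>(x, y)\<in>T. omega (Q x) (Q y) = 0))"
    using lagrangean by blast
  also have "\<dots> \<longleftrightarrow> (\<exists>n. n \<noteq> 0 \<and> (\<forall>(x, y)\<in>T. n \<bullet> klein_a x y = 0)) \<or>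
                 (\<exists>n. n \<noteq> 0 \<and> (\<forall>(x, y)\<in>T. n \<bullet> klein_b x y = 0))"
    by (rule orthogonal_isotropic_iff_klein_annihilated)
  also have "\<dots> \<longleftrightarrow> (\<exists>n. n \<noteq> 0 \<and> (\<forall>i. \<forall>p\<in>U i. Gamma1 (f i) p \<in> great_circle n)) \<or>
                 (\<exists>n. n \<noteq> 0 \<and> (\<forall>i. \<forall>p\<in>U i. Gamma2 (f i) p \<in> great_circle n))"
    unfolding ball_T by (simp add: Gamma_great_circle_iff[OF assms(2)[rule_format]])
  finally show ?thesis .
qed

end
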